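(* Under the hypotheses of the previous setting — $k\ge 2$, $\mathcal H$ a 3-uniform linear hypergraph with no Berge cycle of length $2k+1$, $\pi$ a choice function on $\mathcal H$, $G_\pi$ the graph with edge set $\{\pi(E):E\in\mathcal H,\ \pi(E)\neq\emptyset\}$, $T$ a subtree of $G_\pi$, $x\in V(T)$, $V_i$ the set of vertices of $T$ at distance exactly $i$ from $x$ in $T$, and $G_i=G_\pi[V_i]$ — we have \[ e(G_i)\le (2k-2)|V_i| \quad\text{for all } 1\le i\le k. \]
   Context: A hypergraph is linear if any two distinct hyperedges share at most one vertex. A Berge cycle of length $m$ is a family of $m$ distinct hyperedges $H_0,\dots,H_{m-1}$ for which there exist distinct vertices $v_0,\dots,v_{m-1}$ with $\{v_i,v_{i+1}\}\subset H_i$ (indices mod $m$). A choice function on $\mathcal H$ is a map $\pi$ assigning to each hyperedge $E$ either a 2-element subset $\pi(E)\subset E$ or $\emptyset$. $e(G)$ is the number of edges of $G$. *)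

theory Defs
  imports Main
begin

definition uniform3 :: "'a set set \<Rightarrow> bool" where
  "uniform3 H \<longleftrightarrow> (\<forall>E\<in>H. card E = 3)"

definition linear_hg :: "'a set set \<Rightarrow> bool" where
  "linear_hg H \<longleftrightarrow> (\<forall>E\<in>H. \<forall>F\<in>H. E \<noteq> F \<longrightarrow> card (E \<inter> F) \<le> 1)"

definition berge_cycle :: "'a set set \<Rightarrow> nat \<Rightarrow> bool" where
  "berge_cycle H m \<longleftrightarrow> (\<exists>(Hs :: nat \<Rightarrow> 'a set) (vs :: nat \<Rightarrow> 'a).
      inj_on Hs {..<m} \<and> inj_on vs {..<m} \<and> Hs ` {..<m} \<subseteq> H \<and>
      (\<forall>i<m. {vs i, vs ((i + 1) mod m)} \<subseteq> Hs i))"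

definition choice_function :: "'a set set \<Rightarrow> ('a set \<Rightarrow> 'a set) \<Rightarrow> bool" where
  "choice_function H \<pi> \<longleftrightarrow> (\<forall>E\<in>H. \<pi> E = {} \<or> (\<pi> E \<subseteq> E \<and> card (\<pi> E) = 2))"

definition G_pi :: "'a set set \<Rightarrow> ('a set \<Rightarrow> 'a set) \<Rightarrow> 'a set set" where
  "G_pi H \<pi> = {\<pi> E | E. E \<in> H \<and> \<pi> E \<noteq> {}}"

fun walk :: "'a set set \<Rightarrow> 'a list \<Rightarrow> bool" where
  "walk Es [] = False"
| "walk Es [v] = True"
| "walk Es (u # v # vs) = ({u, v} \<in> Es \<and> walk Es (v # vs))"

definition connected_on :: "'a set \<Rightarrow> 'a set set \<Rightarrow> bool" where
  "connected_on V Es \<longleftrightarrow> (\<forall>u\<in>V. \<forall>v\<in>V. \<exists>p. walk Es p \<and> hd p = u \<and> last p = v)"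

definition has_cycle :: "'a set set \<Rightarrow> bool" where
  "has_cycle Es \<longleftrightarrow> (\<exists>(vs :: nat \<Rightarrow> 'a) m. m \<ge> 3 \<and> inj_on vs {..<m} \<and>
      (\<forall>i<m. {vs i, vs ((i + 1) mod m)} \<in> Es))"

definition is_tree :: "'a set \<Rightarrow> 'a set set \<Rightarrow> bool" where
  "is_tree VT ET \<longleftrightarrow> finite VT \<and> VT \<noteq> {} \<and>
     (\<forall>e\<in>ET. e \<subseteq> VT \<and> card e = 2) \<and> connected_on VT ET \<and> \<not> has_cycle ET"

definition gdist :: "'a set set \<Rightarrow> 'a \<Rightarrow> 'a \<Rightarrow> nat" where
  "gdist Es u v = (LEAST n. \<exists>p. walk Es p \<and> hd p = u \<and> last p = v \<and> length p = n + 1)"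

definition level_set :: "'a set \<Rightarrow> 'a set set \<Rightarrow> 'a \<Rightarrow> nat \<Rightarrow> 'a set" where
  "level_set VT ET x i = {v \<in> VT. gdist ET x v = i}"

definition induced_edges :: "'a set set \<Rightarrow> 'a set \<Rightarrow> nat" where
  "induced_edges G S = card {e \<in> G. e \<subseteq> S}"

end

theory Submission
  imports Defs
begin

text \<open>Every vertex at depth i of T is joined to the root x by a chain of ancestors in T, one at
  each depth. Let F be the edge set of G_pi restricted to the level V_i. If a path in F with
  2(k-i)+2j+1 edges joined two vertices whose depth-j ancestors agree but whose depth-(j+1)
  ancestors differ, closing it up through the two ancestor chains would give a cycle of length
  2k+1 in G_pi, hence a Berge cycle of that length, since distinct edges of G_pi come from
  distinct hyperedges. Now suppose some subgraph of F had minimum degree at least 2k-1. Paths can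
  then be grown greedily, and by induction on j every edge of the subgraph stays within a class of
  vertices with a common depth-j ancestor; at depth i these classes are single vertices, which is
  absurd. So every subgraph of F has a vertex of degree at most 2k-2, and deleting such vertices
  one at a time shows e(F) \<le> (2k-2)|V_i|.\<close>

section \<open>Walks\<close>

lemma walk_nonempty: "walk F xs \<Longrightarrow> xs \<noteq> []"
  by (cases xs) auto

lemma walk_Cons_iff: "ys \<noteq> [] \<Longrightarrow> walk F (u # ys) \<longleftrightarrow> {u, hd ys} \<in> F \<and> walk F ys"
  by (cases ys) auto

lemma walk_conv_nth:
  "walk F xs \<longleftrightarrow> xs \<noteq> [] \<and> (\<forall>m. Suc m < length xs \<longrightarrow> {xs ! m, xs ! Suc m} \<in> F)"
proof (induction F xs rule: walk.induct)
  case (3 F u v vs)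
  show ?case
    unfolding walk.simps 3 by (auto simp: less_Suc_eq_0_disj)
qed auto

lemma walk_nth: "walk F xs \<Longrightarrow> Suc m < length xs \<Longrightarrow> {xs ! m, xs ! Suc m} \<in> F"
  by (simp add: walk_conv_nth)

lemma walk_append:
  "xs \<noteq> [] \<Longrightarrow> ys \<noteq> [] \<Longrightarrow>
    walk F (xs @ ys) \<longleftrightarrow> walk F xs \<and> walk F ys \<and> {last xs, hd ys} \<in> F"
  by (induction xs) (auto simp: walk_Cons_iff)

lemma walk_snoc: "walk F xs \<Longrightarrow> {last xs, v} \<in> F \<Longrightarrow> walk F (xs @ [v])"
  using walk_append[of xs "[v]"] walk_nonempty by fastforce

lemma walk_rev: "walk F xs \<Longrightarrow> walk F (rev xs)"
proof (induction F xs rule: walk.induct)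
  case (3 F u v vs)
  then have "walk F (rev (v # vs) @ [u])"
    by (intro walk_snoc) (auto simp: insert_commute)
  then show ?case by simp
qed auto

lemma walk_mono: "walk F xs \<Longrightarrow> F \<subseteq> G \<Longrightarrow> walk G xs"
  by (induction F xs rule: walk.induct) auto

lemma walk_same_class:
  assumes "\<And>a b. a \<in> W \<Longrightarrow> b \<in> W \<Longrightarrow> {a, b} \<in> F \<Longrightarrow> f a = f b"
  shows "walk F xs \<Longrightarrow> set xs \<subseteq> W \<Longrightarrow> f (hd xs) = f (last xs)"
proof (induction xs)
  case (Cons a xs)
  show ?case
  proof (cases "xs = []")
    case False
    then have "f a = f (hd xs)"
      using Cons.prems by (intro assms) (auto simp: walk_Cons_iff)
    with False Cons show ?thesis by (simp add: walk_Cons_iff)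
  qed simp
qed simp

section \<open>Minimum degree and degeneracy\<close>

definition degree_in :: "'a set set \<Rightarrow> 'a set \<Rightarrow> 'a \<Rightarrow> nat" where
  "degree_in F W w = card {u \<in> W. {w, u} \<in> F}"

lemma walk_prepend_avoiding:
  assumes "finite W" and no_loops: "\<And>e. e \<in> F \<Longrightarrow> card e = 2"
    and min_deg: "\<And>w. w \<in> W \<Longrightarrow> D \<le> degree_in F W w" and "finite A"
    and "walk F xs" "distinct xs" "set xs \<subseteq> W" "set xs \<inter> A = {}"
    and "length xs + n + card A \<le> D + 1"
  shows "\<exists>ys. length ys = n \<and> walk F (ys @ xs) \<and> distinct (ys @ xs) \<and>
    set ys \<subseteq> W \<and> set ys \<inter> A = {}"
  using assms(9)
proof (induction n)
  case 0
  then show ?case using assms(5-8) by auto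
next
  case (Suc n)
  then obtain ys where ys: "length ys = n" "walk F (ys @ xs)" "distinct (ys @ xs)"
      "set ys \<subseteq> W" "set ys \<inter> A = {}"
    by auto
  define zs where "zs = ys @ xs"
  have "zs \<noteq> []" using walk_nonempty[OF ys(2)] by (simp add: zs_def)
  have "hd zs \<in> W" using \<open>zs \<noteq> []\<close> assms(7) ys(4) by (auto simp: zs_def hd_append)
  define B where "B = (set zs - {hd zs}) \<union> A"
  have "distinct zs" using ys(3) by (simp add: zs_def)
  then have "card (set zs - {hd zs}) = length zs - 1"
    using \<open>zs \<noteq> []\<close> by (simp add: card_Diff_singleton distinct_card)
  then have "card B \<le> length zs - 1 + card A"
    unfolding B_def by (metis card_Un_le)
  also have "\<dots> < D"
    using Suc.prems ys(1) walk_nonempty[OF assms(5)] by (cases xs) (auto simp: zs_def)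
  finally have "card B < degree_in F W (hd zs)"
    using min_deg[OF \<open>hd zs \<in> W\<close>] by linarith
  moreover have "finite B" using \<open>finite A\<close> by (simp add: B_def)
  ultimately have "\<not> {u \<in> W. {hd zs, u} \<in> F} \<subseteq> B"
    unfolding degree_in_def using card_mono leD by blast
  then obtain u where "u \<in> W" "{hd zs, u} \<in> F" "u \<notin> B" by blast
  moreover have "u \<noteq> hd zs"
    using no_loops[OF \<open>{hd zs, u} \<in> F\<close>] by auto
  ultimately have "u \<notin> set zs" "u \<notin> A" "walk F (u # zs)"
    using ys(2)[folded zs_def] \<open>zs \<noteq> []\<close> by (auto simp: B_def walk_Cons_iff insert_commute)
  then show ?case
    using ys \<open>u \<in> W\<close> by (intro exI[of _ "u # ys"]) (auto simp: zs_def)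
qed

lemma long_distinct_walk:
  assumes "finite W" "w \<in> W" "\<And>e. e \<in> F \<Longrightarrow> card e = 2"
    and "\<And>w. w \<in> W \<Longrightarrow> D \<le> degree_in F W w"
  shows "\<exists>xs. walk F xs \<and> distinct xs \<and> set xs \<subseteq> W \<and> length xs = D + 1"
  using walk_prepend_avoiding[OF assms(1,3,4), of "{}" "[w]" D] assms(2) by fastforce

text \<open>A vertex of large degree extends a path in many ways; comparing two extensions
  that differ only in their last vertex forces neighbours of a common vertex, and hence
  the vertices at even distance along a path, into the same class.\<close>
lemma edge_ends_same_class:
  assumes "finite W" and no_loops: "\<And>e. e \<in> F \<Longrightarrow> card e = 2"
    and min_deg: "\<And>w. w \<in> W \<Longrightarrow> l \<le> degree_in F W w" and "even l" "2 \<le> l"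
    and long_walks: "\<And>xs. walk F xs \<Longrightarrow> distinct xs \<Longrightarrow> set xs \<subseteq> W \<Longrightarrow> length xs = l \<Longrightarrow>
        f (hd xs) = f (last xs)"
    and "a \<in> W" "b \<in> W" "{a, b} \<in> F"
  shows "f a = f b"
proof -
  note prepend = walk_prepend_avoiding[OF \<open>finite W\<close> no_loops min_deg]
  have neighbours: "f v = f v'"
    if "y \<in> W" "v \<in> W" "v' \<in> W" "{y, v} \<in> F" "{y, v'} \<in> F" for y v v'
  proof -
    have "y \<noteq> v" "y \<noteq> v'" using no_loops that(4,5) by fastforce+
    moreover have "length [y] + (l - 2) + card {v, v'} \<le> l + 1"
      using \<open>2 \<le> l\<close> card_2_iff'[of "{v, v'}"] by (cases "v = v'") auto
    ultimately obtain zs where zs: "length zs = l - 2" "walk F (zs @ [y])" "distinct (zs @ [y])"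
        "set zs \<subseteq> W" "set zs \<inter> {v, v'} = {}"
      using prepend[of "{v, v'}" "[y]" "l - 2"] \<open>y \<in> W\<close> by auto
    have "f (hd (zs @ [y, u])) = f u" if "u \<in> W" "{y, u} \<in> F" "y \<noteq> u" "u \<notin> set zs" for u
      using long_walks[of "zs @ [y, u]"] walk_snoc[OF zs(2), of u] zs that \<open>y \<in> W\<close> \<open>2 \<le> l\<close>
      by auto
    moreover have "hd (zs @ [y, v]) = hd (zs @ [y, v'])" by (cases zs) auto
    ultimately show ?thesis
      using that zs(5) \<open>y \<noteq> v\<close> \<open>y \<noteq> v'\<close> by (metis disjoint_iff insertI1 insertI2)
  qed
  have "a \<noteq> b" using no_loops[OF \<open>{a, b} \<in> F\<close>] by auto
  moreover have "length [b, a] + (l - 2) + card ({} :: 'a set) \<le> l + 1" using \<open>2 \<le> l\<close> by simp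
  ultimately obtain ys where ys: "length ys = l - 2" "walk F (ys @ [b, a])" "distinct (ys @ [b, a])"
      "set ys \<subseteq> W"
    using prepend[of "{}" "[b, a]" "l - 2"] \<open>{a, b} \<in> F\<close> \<open>a \<in> W\<close> \<open>b \<in> W\<close> \<open>2 \<le> l\<close>
    by (auto simp: insert_commute)
  define L where "L = ys @ [b, a]"
  have "length L = l" "set L \<subseteq> W" using ys \<open>a \<in> W\<close> \<open>b \<in> W\<close> \<open>2 \<le> l\<close> by (auto simp: L_def)
  have "f (L ! (2 * t)) = f (L ! 0)" if "2 * t \<le> l - 2" for t
    using that
  proof (induction t)
    case (Suc t)
    have "Suc (Suc (2 * t)) < l" using Suc.prems \<open>2 \<le> l\<close> by simp
    then have "{L ! Suc (2 * t), L ! (2 * t)} \<in> F" "{L ! Suc (2 * t), L ! Suc (Suc (2 * t))} \<in> F"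
      using walk_nth[OF ys(2)[folded L_def]] \<open>length L = l\<close> by (auto simp: insert_commute)
    moreover have "L ! m \<in> W" if "m < l" for m
      using \<open>set L \<subseteq> W\<close> \<open>length L = l\<close> that by auto
    ultimately have "f (L ! (2 * t)) = f (L ! Suc (Suc (2 * t)))"
      using \<open>Suc (Suc (2 * t)) < l\<close> by (intro neighbours) auto
    then show ?case using Suc by simp
  qed simp
  from this[of "(l - 2) div 2"] have "f b = f (hd L)"
    using \<open>even l\<close> \<open>2 \<le> l\<close> ys(1) by (auto simp: L_def nth_append hd_conv_nth)
  also have "f (hd L) = f a"
    using long_walks[of L] ys \<open>length L = l\<close> \<open>set L \<subseteq> W\<close> by (simp add: L_def)
  finally show ?thesis by simp
qed

lemma card_edges_le_degeneracy:
  assumes "finite V" and edges: "\<And>e. e \<in> F \<Longrightarrow> e \<subseteq> V \<and> card e = 2"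
    and low_degree: "\<And>W. W \<subseteq> V \<Longrightarrow> W \<noteq> {} \<Longrightarrow> \<exists>w\<in>W. degree_in F W w \<le> K"
  shows "card F \<le> K * card V"
proof -
  have "card {e \<in> F. e \<subseteq> V} \<le> K * card V"
    using \<open>finite V\<close>
  proof (induction V rule: finite_remove_induct)
    case empty
    have "{e \<in> F. e \<subseteq> {}} = {}" using edges by fastforce
    then show ?case by simp
  next
    case (remove W)
    then obtain w where "w \<in> W" and deg: "degree_in F W w \<le> K"
      using low_degree by blast
    have "{e \<in> F. e \<subseteq> W} \<subseteq> {e \<in> F. e \<subseteq> W - {w}} \<union> (\<lambda>u. {w, u}) ` {u \<in> W. {w, u} \<in> F}"
    proof
      fix e assume e: "e \<in> {e \<in> F. e \<subseteq> W}"
      show "e \<in> {e \<in> F. e \<subseteq> W - {w}} \<union> (\<lambda>u. {w, u}) ` {u \<in> W. {w, u} \<in> F}"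
      proof (cases "w \<in> e")
        case True
        then obtain u where "e = {w, u}"
          using edges[of e] e by (auto simp: card_2_iff doubleton_eq_iff)
        then show ?thesis using e by auto
      qed (use e in auto)
    qed
    moreover have "finite {e \<in> F. e \<subseteq> W - {w}}"
      using \<open>finite W\<close> by (auto intro: finite_subset[of _ "Pow W"])
    ultimately have "card {e \<in> F. e \<subseteq> W}
        \<le> card ({e \<in> F. e \<subseteq> W - {w}} \<union> (\<lambda>u. {w, u}) ` {u \<in> W. {w, u} \<in> F})"
      using \<open>finite W\<close> by (intro card_mono) auto
    also have "\<dots> \<le> card {e \<in> F. e \<subseteq> W - {w}} + card ((\<lambda>u. {w, u}) ` {u \<in> W. {w, u} \<in> F})"
      by (rule card_Un_le)
    also have "\<dots> \<le> K * card (W - {w}) + K"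
      using remove.IH[OF \<open>w \<in> W\<close>] deg card_image_le[of "{u \<in> W. {w, u} \<in> F}" "\<lambda>u. {w, u}"]
        \<open>finite W\<close> by (simp add: degree_in_def)
    also have "\<dots> = K * card W"
      using card_Suc_Diff1[OF \<open>finite W\<close> \<open>w \<in> W\<close>] by (metis mult_Suc_right add.commute)
    finally show ?case .
  qed
  moreover have "{e \<in> F. e \<subseteq> V} = F" using edges by auto
  ultimately show ?thesis by simp
qed

text \<open>Here anc v j plays the role of the depth-j ancestor of v; the hypothesis on odd walks is
  what the absence of Berge cycles of length 2(c+i)+1 provides.\<close>
lemma exists_low_degree_vertex:
  fixes F :: "'a set set" and anc :: "'a \<Rightarrow> nat \<Rightarrow> 'a"
  assumes no_loops: "\<And>e. e \<in> F \<Longrightarrow> card e = 2"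
    and "1 \<le> i"
    and anc_top: "\<And>v. v \<in> V \<Longrightarrow> anc v i = v"
    and anc_bot: "\<And>u v. u \<in> V \<Longrightarrow> v \<in> V \<Longrightarrow> anc u 0 = anc v 0"
    and odd_walks: "\<And>xs j. j < i \<Longrightarrow> walk F xs \<Longrightarrow> distinct xs \<Longrightarrow> set xs \<subseteq> V \<Longrightarrow>
        length xs = 2 * c + 2 * j + 2 \<Longrightarrow> anc (hd xs) j = anc (last xs) j \<Longrightarrow>
        anc (hd xs) (Suc j) = anc (last xs) (Suc j)"
    and "W \<subseteq> V" "finite W" "W \<noteq> {}"
  shows "\<exists>w\<in>W. degree_in F W w \<le> 2 * (c + i) - 2"
proof (rule ccontr)
  assume "\<not> ?thesis"
  then have min_deg: "2 * (c + i) - 1 \<le> degree_in F W w" if "w \<in> W" for w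
    using that by fastforce
  have walks_same_class: "anc (hd xs) j = anc (last xs) j"
    if "\<forall>a\<in>W. \<forall>b\<in>W. {a, b} \<in> F \<longrightarrow> anc a j = anc b j" "walk F xs" "set xs \<subseteq> W" for j xs
    using walk_same_class[of W F "\<lambda>v. anc v j"] that by blast
  have edges_same_class: "\<forall>a\<in>W. \<forall>b\<in>W. {a, b} \<in> F \<longrightarrow> anc a j = anc b j" if "j < i" for j
    using that
  proof (induction j)
    case 0
    then show ?case using anc_bot \<open>W \<subseteq> V\<close> by blast
  next
    case (Suc j)
    have deg: "2 * c + 2 * j + 2 \<le> degree_in F W w" if "w \<in> W" for w
      using min_deg[OF that] Suc.prems by arith
    have long_walks: "anc (hd xs) (Suc j) = anc (last xs) (Suc j)"
      if "walk F xs" "distinct xs" "set xs \<subseteq> W" "length xs = 2 * c + 2 * j + 2" for xs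
      using odd_walks[OF _ that(1,2) _ that(4) walks_same_class[OF Suc.IH that(1,3)]]
        that(3) \<open>W \<subseteq> V\<close> Suc.prems by auto
    show ?case
    proof (intro ballI impI)
      fix a b assume "a \<in> W" "b \<in> W" "{a, b} \<in> F"
      show "anc a (Suc j) = anc b (Suc j)"
        by (rule edge_ends_same_class[OF \<open>finite W\<close> no_loops deg _ _ long_walks
              \<open>a \<in> W\<close> \<open>b \<in> W\<close> \<open>{a, b} \<in> F\<close>]) auto
    qed
  qed
  obtain w where "w \<in> W" using \<open>W \<noteq> {}\<close> by blast
  then obtain xs where xs: "walk F xs" "distinct xs" "set xs \<subseteq> W" "length xs = 2 * c + 2 * i"
    using long_distinct_walk[OF \<open>finite W\<close> _ no_loops min_deg] \<open>1 \<le> i\<close> by fastforce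
  then have "anc (hd xs) (Suc (i - 1)) = anc (last xs) (Suc (i - 1))"
    using \<open>1 \<le> i\<close> \<open>W \<subseteq> V\<close>
    by (intro odd_walks walks_same_class edges_same_class) auto
  moreover have "xs \<noteq> []" using walk_nonempty[OF xs(1)] .
  then have "hd xs \<in> V" "last xs \<in> V"
    using xs(3) \<open>W \<subseteq> V\<close> hd_in_set last_in_set by blast+
  ultimately have "hd xs = last xs" using anc_top \<open>1 \<le> i\<close> by simp
  moreover have "hd xs \<noteq> last xs"
    using xs(2,4) \<open>1 \<le> i\<close> by (cases xs rule: rev_cases) (auto simp: hd_append)
  ultimately show False by blast
qed

section \<open>Ancestors in a rooted connected graph\<close>

locale rooted_graph =
  fixes V :: "'a set" and Es :: "'a set set" and x :: 'a
  assumes connected: "connected_on V Es"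
    and edges_in: "\<And>e. e \<in> Es \<Longrightarrow> e \<subseteq> V"
    and root_in: "x \<in> V"
begin

abbreviation depth :: "'a \<Rightarrow> nat" where
  "depth \<equiv> gdist Es x"

lemma shortest_walk:
  assumes "v \<in> V"
  obtains p where "walk Es p" "hd p = x" "last p = v" "length p = depth v + 1"
proof -
  obtain p where p: "walk Es p" "hd p = x" "last p = v"
    using connected root_in assms unfolding connected_on_def by blast
  then have "length p - 1 + 1 = length p"
    using walk_nonempty[OF p(1)] by simp
  with p have "\<exists>n p. walk Es p \<and> hd p = x \<and> last p = v \<and> length p = n + 1"
    by metis
  from LeastI_ex[OF this] that show thesis
    unfolding gdist_def by blast
qed

lemma depth_le_walk:
  assumes "walk Es p" "hd p = x" "last p = v"
  shows "depth v \<le> length p - 1"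
proof -
  have "length p - 1 + 1 = length p"
    using walk_nonempty[OF assms(1)] by simp
  with assms have "\<exists>q. walk Es q \<and> hd q = x \<and> last q = v \<and> length q = length p - 1 + 1"
    by metis
  then show ?thesis unfolding gdist_def by (rule Least_le)
qed

lemma depth_eq_0:
  assumes "v \<in> V" "depth v = 0"
  shows "v = x"
proof -
  obtain p where "hd p = x" "last p = v" "length p = 1"
    using shortest_walk[OF assms(1)] assms(2) by auto
  then show ?thesis by (cases p) auto
qed

lemma exists_parent:
  assumes "v \<in> V" "depth v = Suc n"
  shows "\<exists>w. {w, v} \<in> Es \<and> depth w = n"
proof -
  obtain p where p: "walk Es p" "hd p = x" "last p = v" "length p = Suc (Suc n)"
    using shortest_walk[OF \<open>v \<in> V\<close>] assms(2) by auto
  define w where "w = p ! n"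
  have "p \<noteq> []" using p(4) by auto
  then have "p ! Suc n = v" using p(3,4) by (simp add: last_conv_nth)
  then have e: "{w, v} \<in> Es" using walk_nth[OF p(1), of n] p(4) by (simp add: w_def)
  have "walk Es (take (Suc n) p)" using p(1,4) by (simp add: walk_conv_nth)
  moreover have "hd (take (Suc n) p) = x" using p(2) by simp
  moreover have "last (take (Suc n) p) = w"
    using p(4) by (subst last_conv_nth) (auto simp: w_def)
  ultimately have "depth w \<le> n" using depth_le_walk[of "take (Suc n) p"] p(4) by simp
  moreover have "n \<le> depth w"
  proof -
    obtain q where q: "walk Es q" "hd q = x" "last q = w" "length q = depth w + 1"
      using shortest_walk edges_in[OF e] by blast
    have "walk Es (q @ [v])" using walk_snoc[OF q(1)] q(3) e by simp
    moreover have "hd (q @ [v]) = x" using q(2) walk_nonempty[OF q(1)] by simp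
    ultimately have "depth v \<le> depth w + 1"
      using depth_le_walk[of "q @ [v]"] q(4) by simp
    with assms(2) show ?thesis by simp
  qed
  ultimately show ?thesis using e by (intro exI[of _ w]) simp
qed

definition parent :: "'a \<Rightarrow> 'a" where
  "parent v = (SOME w. {w, v} \<in> Es \<and> depth w = depth v - 1)"

definition ancestor :: "'a \<Rightarrow> nat \<Rightarrow> 'a" where
  "ancestor v m = (parent ^^ (depth v - m)) v"

lemma parent:
  assumes "v \<in> V" "0 < depth v"
  shows "{parent v, v} \<in> Es" "depth (parent v) = depth v - 1"
proof -
  obtain n where "depth v = Suc n" using assms(2) gr0_conv_Suc by blast
  then have "\<exists>w. {w, v} \<in> Es \<and> depth w = depth v - 1"
    using exists_parent[OF assms(1)] by simp
  then have "{parent v, v} \<in> Es \<and> depth (parent v) = depth v - 1"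
    unfolding parent_def by (rule someI_ex)
  then show "{parent v, v} \<in> Es" "depth (parent v) = depth v - 1" by blast+
qed

lemma parent_in: "v \<in> V \<Longrightarrow> 0 < depth v \<Longrightarrow> parent v \<in> V"
  using parent(1) edges_in by blast

lemma funpow_parent:
  assumes "v \<in> V" "d \<le> depth v"
  shows "(parent ^^ d) v \<in> V \<and> depth ((parent ^^ d) v) = depth v - d"
  using assms(2)
proof (induction d)
  case (Suc d)
  then show ?case using parent_in parent(2) by simp
qed (simp add: assms(1))

lemma ancestor_in: "v \<in> V \<Longrightarrow> m \<le> depth v \<Longrightarrow> ancestor v m \<in> V"
  unfolding ancestor_def using funpow_parent by simp

lemma depth_ancestor: "v \<in> V \<Longrightarrow> m \<le> depth v \<Longrightarrow> depth (ancestor v m) = m"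
  unfolding ancestor_def using funpow_parent[of v "depth v - m"] by simp

lemma ancestor_depth [simp]: "ancestor v (depth v) = v"
  by (simp add: ancestor_def)

lemma ancestor_0: "v \<in> V \<Longrightarrow> ancestor v 0 = x"
  using depth_eq_0 ancestor_in depth_ancestor by simp

lemma ancestor_ancestor:
  assumes "v \<in> V" "m \<le> d" "d \<le> depth v"
  shows "ancestor (ancestor v d) m = ancestor v m"
proof -
  have "(parent ^^ (d - m)) ((parent ^^ (depth v - d)) v) = (parent ^^ (d - m + (depth v - d))) v"
    by (simp add: funpow_add)
  moreover have "d - m + (depth v - d) = depth v - m" using assms(2,3) by simp
  ultimately show ?thesis
    using depth_ancestor[OF assms(1,3)] by (simp add: ancestor_def)
qed

lemma ancestor_edge:
  assumes "v \<in> V" "m < depth v"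
  shows "{ancestor v m, ancestor v (Suc m)} \<in> Es"
proof -
  define w where "w = ancestor v (Suc m)"
  have "w \<in> V" "depth w = Suc m"
    using ancestor_in depth_ancestor assms by (simp_all add: w_def Suc_leI)
  moreover have "ancestor v m = parent w"
    using ancestor_ancestor[OF assms(1), of m "Suc m"] assms(2) \<open>depth w = Suc m\<close>
    by (simp add: w_def ancestor_def)
  ultimately show ?thesis using parent(1)[of w] by (simp add: w_def)
qed

lemma walk_ancestors:
  assumes "v \<in> V" "a < b" "b \<le> depth v"
  shows "walk Es (map (ancestor v) [a..<b])"
  using assms ancestor_edge by (auto simp: walk_conv_nth)

lemma distinct_ancestors:
  assumes "v \<in> V" "b \<le> depth v"
  shows "distinct (map (ancestor v) [a..<b])"
proof -
  have "inj_on (ancestor v) {a..<b}"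
    by (rule inj_on_inverseI[of _ depth]) (use assms depth_ancestor in auto)
  then show ?thesis by (simp add: distinct_map)
qed

lemma path_through_common_ancestor:
  assumes "u \<in> V" "v \<in> V" "depth u = i" "depth v = i" "j < i"
    and agree: "ancestor u j = ancestor v j"
    and split: "ancestor u (Suc j) \<noteq> ancestor v (Suc j)"
  obtains P where "walk Es P" "distinct P" "hd P = ancestor v (i - 1)" "last P = ancestor u (i - 1)"
    "length P = 2 * (i - j) - 1" "\<forall>z\<in>set P. depth z < i"
proof -
  define Pv where "Pv = rev (map (ancestor v) [j..<i])"
  define Pu where "Pu = map (ancestor u) [Suc j..<i]"
  have Pv: "walk Es Pv" "distinct Pv" "hd Pv = ancestor v (i - 1)" "last Pv = ancestor v j"
    using walk_ancestors[of v j i] distinct_ancestors[of v i j] assms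
    by (auto simp: Pv_def walk_rev hd_rev last_rev hd_map last_map)
  have set_Pv: "\<exists>m. j \<le> m \<and> m < i \<and> z = ancestor v m" if "z \<in> set Pv" for z
    using that by (auto simp: Pv_def)
  have set_Pu: "\<exists>m. Suc j \<le> m \<and> m < i \<and> z = ancestor u m" if "z \<in> set Pu" for z
    using that by (auto simp: Pu_def)
  have "set Pv \<inter> set Pu = {}"
  proof (rule ccontr)
    assume "set Pv \<inter> set Pu \<noteq> {}"
    then obtain m m' where m: "j \<le> m" "m < i" and m': "Suc j \<le> m'" "m' < i"
      and eq: "ancestor v m = ancestor u m'"
      using set_Pv set_Pu by (metis disjoint_iff)
    have "m = m'" using eq depth_ancestor assms m m' by (metis less_imp_le_nat)
    then have "ancestor v (Suc j) = ancestor u (Suc j)"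
      using ancestor_ancestor assms m' eq by (metis less_imp_le_nat)
    with split show False by simp
  qed
  then have "distinct (Pv @ Pu)"
    using Pv(2) distinct_ancestors[of u i "Suc j"] assms by (simp add: Pu_def)
  moreover have "walk Es (Pv @ Pu) \<and> last (Pv @ Pu) = ancestor u (i - 1)"
  proof (cases "Suc j = i")
    case True
    then have "i - 1 = j" by simp
    then show ?thesis using Pv agree by (simp add: Pu_def)
  next
    case False
    then have "Pu \<noteq> []" "hd Pu = ancestor u (Suc j)" "last Pu = ancestor u (i - 1)"
      using assms(5) by (auto simp: Pu_def hd_map last_map)
    moreover have "walk Es Pu" using walk_ancestors[of u "Suc j" i] assms False by (simp add: Pu_def)
    moreover have "{last Pv, hd Pu} \<in> Es"
      using ancestor_edge[of u j] assms \<open>hd Pu = ancestor u (Suc j)\<close> Pv(4) by simp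
    ultimately show ?thesis
      using Pv walk_append[of Pv Pu] walk_nonempty by auto
  qed
  moreover have "hd (Pv @ Pu) = ancestor v (i - 1)"
    using Pv(3) walk_nonempty[OF Pv(1)] by simp
  moreover have "length (Pv @ Pu) = 2 * (i - j) - 1"
    using assms(5) by (simp add: Pv_def Pu_def)
  moreover have "\<forall>z\<in>set (Pv @ Pu). depth z < i"
  proof
    fix z assume "z \<in> set (Pv @ Pu)"
    then obtain w m where "w \<in> {u, v}" "m < i" "z = ancestor w m"
      using set_Pv set_Pu by fastforce
    then show "depth z < i" using depth_ancestor assms by auto
  qed
  ultimately show thesis using that by blast
qed

end

section \<open>Cycles of G_pi and Berge cycles\<close>

lemma mod_add_2_neq: "(n :: nat) < m \<Longrightarrow> 3 \<le> m \<Longrightarrow> (n + 2) mod m \<noteq> n"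
  by (cases "n + 2 < m") (auto simp: le_mod_geq)

lemma berge_cycle_if_cycle_in_G_pi:
  assumes "choice_function H \<pi>" "distinct cyc" "walk (G_pi H \<pi>) cyc"
    and "{last cyc, hd cyc} \<in> G_pi H \<pi>" "3 \<le> length cyc"
  shows "berge_cycle H (length cyc)"
proof -
  define m where "m = length cyc"
  define vs where "vs n = cyc ! n" for n
  have "{vs n, vs (Suc n mod m)} \<in> G_pi H \<pi>" if "n < m" for n
  proof (cases "Suc n < m")
    case True
    then show ?thesis using walk_nth[OF assms(3), of n] by (simp add: vs_def m_def)
  next
    case False
    then have "Suc n = m" using that by simp
    then have "n = m - 1" "Suc n mod m = 0" by auto
    moreover have "cyc \<noteq> []" using assms(5) by auto
    ultimately show ?thesis
      using assms(4) by (simp add: vs_def m_def last_conv_nth hd_conv_nth)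
  qed
  then have "\<forall>n<m. \<exists>E. E \<in> H \<and> \<pi> E = {vs n, vs (Suc n mod m)}"
    by (force simp: G_pi_def)
  then obtain Hs where Hs: "\<And>n. n < m \<Longrightarrow> Hs n \<in> H \<and> \<pi> (Hs n) = {vs n, vs (Suc n mod m)}"
    by metis
  have vs_inj: "a = b" if "a < m" "b < m" "vs a = vs b" for a b
    using that assms(2) by (simp add: vs_def m_def nth_eq_iff_index_eq)
  have "inj_on Hs {..<m}"
  proof (rule inj_onI)
    fix a b assume "a \<in> {..<m}" "b \<in> {..<m}" "Hs a = Hs b"
    then have "a < m" "b < m" by auto
    then have "{vs a, vs (Suc a mod m)} = {vs b, vs (Suc b mod m)}"
      using Hs \<open>Hs a = Hs b\<close> by metis
    then have "(vs a = vs b \<and> vs (Suc a mod m) = vs (Suc b mod m)) \<or>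
        (vs a = vs (Suc b mod m) \<and> vs (Suc a mod m) = vs b)"
      by (simp add: doubleton_eq_iff)
    moreover have "Suc a mod m < m" "Suc b mod m < m" using \<open>a < m\<close> by simp_all
    ultimately have "a = b \<or> (a = Suc b mod m \<and> Suc a mod m = b)"
      using vs_inj \<open>a < m\<close> \<open>b < m\<close> by blast
    moreover have "(b + 2) mod m \<noteq> b"
      using mod_add_2_neq \<open>b < m\<close> assms(5) by (simp add: m_def)
    ultimately show "a = b" by (auto simp: mod_Suc_eq)
  qed
  moreover have "inj_on vs {..<m}" using vs_inj by (auto intro: inj_onI)
  moreover have "{vs n, vs (Suc n mod m)} \<subseteq> Hs n" if "n < m" for n
    using Hs[OF that] assms(1) unfolding choice_function_def by (metis insert_not_empty)
  ultimately show ?thesis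
    unfolding berge_cycle_def m_def[symmetric] using Hs by (intro exI[of _ Hs] exI[of _ vs]) auto
qed

context rooted_graph
begin

lemma level_walk_same_ancestor:
  assumes "choice_function H \<pi>" "Es \<subseteq> G_pi H \<pi>" "\<not> berge_cycle H (2 * k + 1)"
    and "i \<le> k" "j < i"
    and xs: "walk (G_pi H \<pi>) xs" "distinct xs" "set xs \<subseteq> level_set V Es x i"
      "length xs = 2 * (k - i) + 2 * j + 2"
    and agree: "ancestor (hd xs) j = ancestor (last xs) j"
  shows "ancestor (hd xs) (Suc j) = ancestor (last xs) (Suc j)"
proof (rule ccontr)
  assume split: "ancestor (hd xs) (Suc j) \<noteq> ancestor (last xs) (Suc j)"
  define u where "u = hd xs"
  define v where "v = last xs"
  have "xs \<noteq> []" using xs(4) by auto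
  have depth_xs: "z \<in> V \<and> depth z = i" if "z \<in> set xs" for z
    using that xs(3) by (auto simp: level_set_def)
  have "u \<in> V" "depth u = i" "v \<in> V" "depth v = i"
    using depth_xs hd_in_set[OF \<open>xs \<noteq> []\<close>] last_in_set[OF \<open>xs \<noteq> []\<close>]
    by (simp_all add: u_def v_def)
  obtain P where P: "walk Es P" "distinct P" "hd P = ancestor v (i - 1)" "last P = ancestor u (i - 1)"
      "length P = 2 * (i - j) - 1" "\<forall>z\<in>set P. depth z < i"
    using path_through_common_ancestor[OF \<open>u \<in> V\<close> \<open>v \<in> V\<close> \<open>depth u = i\<close> \<open>depth v = i\<close>
        \<open>j < i\<close>] agree split by (auto simp: u_def v_def)
  have "P \<noteq> []" using P(5) \<open>j < i\<close> by auto
  have edge: "{ancestor w (i - 1), w} \<in> G_pi H \<pi>" if "w \<in> V" "depth w = i" for w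
    using ancestor_edge[OF that(1), of "i - 1"] that \<open>j < i\<close> assms(2) by auto
  have "set xs \<inter> set P = {}" using depth_xs P(6) by fastforce
  then have "distinct (xs @ P)" using xs(2) P(2) by simp
  moreover have "walk (G_pi H \<pi>) (xs @ P)"
  proof -
    have "{last xs, hd P} \<in> G_pi H \<pi>"
      using edge[OF \<open>v \<in> V\<close> \<open>depth v = i\<close>] P(3) by (simp add: v_def insert_commute)
    then show ?thesis
      using walk_append[OF \<open>xs \<noteq> []\<close> \<open>P \<noteq> []\<close>] xs(1) walk_mono[OF P(1) assms(2)] by blast
  qed
  moreover have "{last (xs @ P), hd (xs @ P)} \<in> G_pi H \<pi>"
    using edge[OF \<open>u \<in> V\<close> \<open>depth u = i\<close>] P(4) \<open>xs \<noteq> []\<close> \<open>P \<noteq> []\<close> by (simp add: u_def)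
  moreover have "length (xs @ P) = 2 * k + 1"
    using xs(4) P(5) \<open>i \<le> k\<close> \<open>j < i\<close> by simp
  ultimately have "berge_cycle H (2 * k + 1)"
    using berge_cycle_if_cycle_in_G_pi[OF assms(1), of "xs @ P"] \<open>j < i\<close> \<open>i \<le> k\<close> by simp
  with assms(3) show False by simp
qed

end

theorem corollary5p3:
  fixes H :: "'a set set" and \<pi> :: "'a set \<Rightarrow> 'a set"
    and k :: nat and VT :: "'a set" and ET :: "'a set set" and x :: 'a and i :: nat
  assumes "k \<ge> 2"
    and "finite H"
    and "uniform3 H"
    and "linear_hg H"
    and "\<not> berge_cycle H (2 * k + 1)"
    and "choice_function H \<pi>"
    and "is_tree VT ET"
    and "VT \<subseteq> \<Union> H"
    and "ET \<subseteq> G_pi H \<pi>"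
    and "x \<in> VT"
    and "1 \<le> i" and "i \<le> k"
  shows "induced_edges (G_pi H \<pi>) (level_set VT ET x i)
           \<le> (2 * k - 2) * card (level_set VT ET x i)"
proof -
  interpret rooted_graph VT ET x
    using assms(7,10) by unfold_locales (auto simp: is_tree_def)
  define V where "V = level_set VT ET x i"
  define F where "F = {e \<in> G_pi H \<pi>. e \<subseteq> V}"
  have "finite V" using assms(7) by (simp add: V_def level_set_def is_tree_def)
  have edges: "e \<subseteq> V \<and> card e = 2" if "e \<in> F" for e
    using that assms(6) by (auto simp: F_def G_pi_def choice_function_def)
  have "\<exists>w\<in>W. degree_in F W w \<le> 2 * (k - i + i) - 2" if "W \<subseteq> V" "W \<noteq> {}" for W
  proof (rule exists_low_degree_vertex[where anc = ancestor])
    show "\<And>v. v \<in> V \<Longrightarrow> ancestor v i = v" by (auto simp: V_def level_set_def)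
    show "\<And>u v. u \<in> V \<Longrightarrow> v \<in> V \<Longrightarrow> ancestor u 0 = ancestor v 0"
      by (simp add: V_def level_set_def ancestor_0)
    show "ancestor (hd xs) (Suc j) = ancestor (last xs) (Suc j)"
      if "j < i" "walk F xs" "distinct xs" "set xs \<subseteq> V" "length xs = 2 * (k - i) + 2 * j + 2"
        "ancestor (hd xs) j = ancestor (last xs) j" for xs j
      using level_walk_same_ancestor[OF assms(6,9,5,12)] walk_mono[of F xs "G_pi H \<pi>"] that
      by (auto simp: F_def V_def)
  qed (use edges that assms(11) finite_subset[OF _ \<open>finite V\<close>] in auto)
  then have "card F \<le> (2 * k - 2) * card V"
    using card_edges_le_degeneracy[OF \<open>finite V\<close> edges] assms(12) by simp
  then show ?thesis by (simp add: induced_edges_def F_def V_def)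
qed

end
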